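(* Let $\mathbf{b}\in H_{1,2,2}$ have odd norm. Then there is exactly one unit $\mathbf{u}$ of $H_{1,2,2}$ such that $\mathbf{b}\mathbf{u}$ is primary, and exactly one unit $\mathbf{u}'$ of $H_{1,2,2}$ such that $\mathbf{u}'\mathbf{b}$ is primary.
   Context: Let $\mathbf{i},\mathbf{j},\mathbf{k}$ be the standard quaternion units; $\overline{\mathbf{q}}$ is quaternion conjugation and $N(\mathbf{q})=\mathbf{q}\overline{\mathbf{q}}$. $H_{1,2,2}$ is the subring of the quaternions equal to the $\mathbb{Z}$-module generated by $\mathbf{v}_1=1$, $\mathbf{v}_2=\mathbf{i}$, $\mathbf{v}_3=\tfrac12(1+\mathbf{i}+\sqrt2\,\mathbf{j})$, $\mathbf{v}_4=\tfrac12(1+\mathbf{i}+\sqrt2\,\mathbf{k})$; it has 24 units (elements of norm 1). Let $I = 2(1+\mathbf{i})H_{1,2,2}$ (equal to $H_{1,2,2}\,2(1+\mathbf{i})$). An element $\mathbf{q}\in H_{1,2,2}$ is primary if $\mathbf{q}-1\in I$ or $\mathbf{q}-(1+2\mathbf{v}_3)\in I$. *)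

theory Defs
  imports Main "HOL.Real" "HOL.NthRoot"
begin

datatype quat = Quat (re: real) (im1: real) (im2: real) (im3: real)

instantiation quat :: "{zero, one, plus, minus, uminus, times}"
begin
definition "0 = Quat 0 0 0 0"
definition "1 = Quat 1 0 0 0"
definition "p + q = Quat (re p + re q) (im1 p + im1 q) (im2 p + im2 q) (im3 p + im3 q)"
definition "p - q = Quat (re p - re q) (im1 p - im1 q) (im2 p - im2 q) (im3 p - im3 q)"
definition "- q = Quat (- re q) (- im1 q) (- im2 q) (- im3 q)"
definition "p * q = Quat
   (re p * re q - im1 p * im1 q - im2 p * im2 q - im3 p * im3 q)
   (re p * im1 q + im1 p * re q + im2 p * im3 q - im3 p * im2 q)
   (re p * im2 q - im1 p * im3 q + im2 p * re q + im3 p * im1 q)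
   (re p * im3 q + im1 p * im2 q - im2 p * im1 q + im3 p * re q)"
instance ..
end

definition qscalar :: "real \<Rightarrow> quat" where "qscalar r = Quat r 0 0 0"

definition qi :: quat where "qi = Quat 0 1 0 0"
definition qj :: quat where "qj = Quat 0 0 1 0"
definition qk :: quat where "qk = Quat 0 0 0 1"

definition qconj :: "quat \<Rightarrow> quat" where
  "qconj q = Quat (re q) (- im1 q) (- im2 q) (- im3 q)"
definition qN :: "quat \<Rightarrow> quat" where "qN q = q * qconj q"

definition v1 :: quat where "v1 = 1"
definition v2 :: quat where "v2 = qi"
definition v3 :: quat where "v3 = qscalar (1/2) * (1 + qi + qscalar (sqrt 2) * qj)"
definition v4 :: quat where "v4 = qscalar (1/2) * (1 + qi + qscalar (sqrt 2) * qk)"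

definition H122 :: "quat set" where
  "H122 = {qscalar (of_int a) * v1 + qscalar (of_int b) * v2 + qscalar (of_int c) * v3
            + qscalar (of_int d) * v4 | a b c d :: int. True}"

definition H122_units :: "quat set" where
  "H122_units = {u \<in> H122. qN u = 1}"

definition Iid :: "quat set" where
  "Iid = {qscalar 2 * (1 + qi) * h | h. h \<in> H122}"

definition primary :: "quat \<Rightarrow> bool" where
  "primary q \<longleftrightarrow> q \<in> H122 \<and> (q - 1 \<in> Iid \<or> q - (1 + qscalar 2 * v3) \<in> Iid)"

definition odd_norm :: "quat \<Rightarrow> bool" where
  "odd_norm q \<longleftrightarrow> (\<exists>n::int. odd n \<and> qN q = qscalar (of_int n))"

end

theory Submission
  imports Defs
begin

text \<open>
  In coordinates with respect to \<open>v\<^sub>1, \<dots>, v\<^sub>4\<close>, multiplication, the norm and membership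
  in \<open>I\<close> become integer polynomial conditions. The norm is a positive definite quadratic form,
  so the 24 units lie in a small box. Since \<open>4 H\<^sub>1\<^sub>,\<^sub>2\<^sub>,\<^sub>2 \<subseteq> I\<close>, whether \<open>b u\<close> or \<open>u b\<close> is
  primary, and the parity of \<open>N(b)\<close>, depend only on \<open>b\<close> modulo 4. The theorem thus
  reduces to a finite check over the 256 residues modulo 4, done by evaluation.
\<close>

lemma ex1_image_iff: "inj_on f A \<Longrightarrow> (\<exists>!y. y \<in> f ` A \<and> P y) \<longleftrightarrow> (\<exists>!x. x \<in> A \<and> P (f x))"
  unfolding inj_on_def by blast

lemma ex1_if_length_filter_eq_1:
  assumes "length (filter P xs) = 1"
  shows "\<exists>!x. x \<in> set xs \<and> P x"
proof -
  from assms obtain y where "filter P xs = [y]" by (auto simp: length_Suc_conv)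
  then have "{x \<in> set xs. P x} = {y}" using set_filter [of P xs] by simp
  then show ?thesis by (intro ex1I [of _ y]) blast+
qed

lemma abs_le_if_square_less: "(k::int)^2 < (n + 1)^2 \<Longrightarrow> 0 \<le> n \<Longrightarrow> \<bar>k\<bar> \<le> n"
  by (metis abs_le_square_iff abs_of_nonneg not_less zless_imp_add1_zle add_nonneg_nonneg zero_le_one)

datatype hcoord = HC int int int int

instantiation hcoord :: "{one, plus, minus, times}"
begin
definition "1 = HC 1 0 0 0"
fun plus_hcoord where "HC a b c d + HC e f g h = HC (a + e) (b + f) (c + g) (d + h)"
fun minus_hcoord where "HC a b c d - HC e f g h = HC (a - e) (b - f) (c - g) (d - h)"
fun times_hcoord where
  "HC a b c d * HC e f g h = HC
     (a*e - b*f - b*g - c*g - d*f - d*g - d*h)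
     (a*f + b*e + b*h + c*f + c*h - d*g)
     (a*g - b*h + c*e + c*g + d*f + d*g)
     (a*h + b*g - c*f + d*e + d*g + d*h)"
instance ..
end

fun hc_scale :: "int \<Rightarrow> hcoord \<Rightarrow> hcoord" where
  "hc_scale k (HC a b c d) = HC (k * a) (k * b) (k * c) (k * d)"

fun quat_of :: "hcoord \<Rightarrow> quat" where
  "quat_of (HC a b c d) = Quat (a + (c + d) / 2) (b + (c + d) / 2) (c * sqrt 2 / 2) (d * sqrt 2 / 2)"

fun hnorm :: "hcoord \<Rightarrow> int" where
  "hnorm (HC a b c d) = a*a + b*b + (a + b)*(c + d) + c*c + d*d + c*d"

text \<open>The left multiples of \<open>2(1 + i)\<close> have coordinates \<open>2(e-f-g, e+f+h, g-h, g+h)\<close>.\<close>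
fun in_I :: "hcoord \<Rightarrow> bool" where
  "in_I (HC a b c d) \<longleftrightarrow> even a \<and> even b \<and> even c \<and> even d \<and> 4 dvd (a + b + c) \<and> 4 dvd (c - d)"

definition hprimary :: "hcoord \<Rightarrow> bool" where
  "hprimary y \<longleftrightarrow> in_I (y - 1) \<or> in_I (y - HC 1 0 2 0)"

lemma quat_of_mult: "quat_of (x * y) = quat_of x * quat_of y"
  by (cases x; cases y) (simp add: times_quat_def algebra_simps divide_simps)

lemma quat_of_diff: "quat_of (x - y) = quat_of x - quat_of y"
  by (cases x; cases y) (simp add: minus_quat_def algebra_simps divide_simps)

lemma inj_quat_of: "inj quat_of"
proof (rule injI)
  fix x y assume "quat_of x = quat_of y"
  then show "x = y" by (cases x; cases y) (auto simp: divide_simps)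
qed

lemma quat_of_one: "quat_of 1 = 1"
  by (simp add: one_hcoord_def one_quat_def)

lemma quat_of_one_plus_2v3: "quat_of (HC 1 0 2 0) = 1 + qscalar 2 * v3"
  by (simp add: one_quat_def v3_def qscalar_def qi_def qj_def plus_quat_def times_quat_def)

lemma quat_of_Iid_generator: "quat_of (HC 2 2 0 0) = qscalar 2 * (1 + qi)"
  by (simp add: one_quat_def qscalar_def qi_def plus_quat_def times_quat_def)

lemma H122_eq_range: "H122 = range quat_of"
proof -
  have "qscalar (of_int a) * v1 + qscalar (of_int b) * v2 + qscalar (of_int c) * v3
          + qscalar (of_int d) * v4 = quat_of (HC a b c d)" for a b c d
    by (simp add: one_quat_def v1_def v2_def v3_def v4_def qscalar_def qi_def qj_def qk_def
        plus_quat_def times_quat_def algebra_simps divide_simps)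
  then show ?thesis
    unfolding H122_def by (auto simp del: quat_of.simps) (metis hcoord.exhaust)
qed

lemma qN_quat_of: "qN (quat_of x) = qscalar (hnorm x)"
  by (cases x) (simp add: qN_def qconj_def times_quat_def qscalar_def algebra_simps divide_simps)

lemma quat_of_in_Iid_iff: "quat_of x \<in> Iid \<longleftrightarrow> in_I x"
proof
  assume "quat_of x \<in> Iid"
  then obtain h where "quat_of x = quat_of (HC 2 2 0 0 * h)"
    unfolding Iid_def H122_eq_range quat_of_Iid_generator[symmetric] quat_of_mult by auto
  then have "x = HC 2 2 0 0 * h" using inj_quat_of by (simp add: inj_eq)
  then show "in_I x" by (cases h) (auto simp: algebra_simps)
next
  obtain a b c d where x: "x = HC a b c d" by (cases x)
  assume "in_I x"
  then have "even a" "even b" "even c" "even d" "(4::int) dvd (a + b + c)" "(4::int) dvd (c - d)"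
    unfolding x by auto
  then have "(4::int) dvd (b - a - d)" "(4::int) dvd (c + d)" "(4::int) dvd (d - c)"
    by presburger+
  then obtain e f g h where "a + b + c = 4*e" "b - a - d = 4*f" "c + d = 4*g" "d - c = 4*h"
    using \<open>4 dvd (a + b + c)\<close> by (metis dvdE)
  then have "x = HC 2 2 0 0 * HC e f g h" unfolding x by simp
  then have "quat_of x = qscalar 2 * (1 + qi) * quat_of (HC e f g h)"
    by (simp only: quat_of_mult quat_of_Iid_generator)
  then show "quat_of x \<in> Iid" unfolding Iid_def H122_eq_range by blast
qed

lemma primary_quat_of_iff: "primary (quat_of y) \<longleftrightarrow> hprimary y"
proof -
  have "quat_of y - 1 = quat_of (y - 1)"
    and "quat_of y - (1 + qscalar 2 * v3) = quat_of (y - HC 1 0 2 0)"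
    by (simp_all only: quat_of_diff quat_of_one quat_of_one_plus_2v3)
  then show ?thesis
    by (simp add: primary_def hprimary_def H122_eq_range quat_of_in_Iid_iff)
qed

lemma four_hnorm_eq_sum_squares:
  "4 * hnorm (HC a b c d) = (2*a + c + d)^2 + (2*b + c + d)^2 + 2*c^2 + 2*d^2"
  by (simp add: power2_eq_square algebra_simps)

lemma set_hc_box:
  "set [HC a b c d. a \<leftarrow> as, b \<leftarrow> bs, c \<leftarrow> cs, d \<leftarrow> ds]
     = {HC a b c d | a b c d. a \<in> set as \<and> b \<in> set bs \<and> c \<in> set cs \<and> d \<in> set ds}"
  by auto

definition unit_coords :: "hcoord list" where
  "unit_coords = filter (\<lambda>x. hnorm x = 1)
     [HC a b c d. a \<leftarrow> [-2..2], b \<leftarrow> [-2..2], c \<leftarrow> [-1..1], d \<leftarrow> [-1..1]]"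

lemma hnorm_eq_1_iff: "hnorm x = 1 \<longleftrightarrow> x \<in> set unit_coords"
proof
  assume "x \<in> set unit_coords"
  then show "hnorm x = 1" unfolding unit_coords_def set_filter by blast
next
  obtain a b c d where x: "x = HC a b c d" by (cases x)
  assume "hnorm x = 1"
  then have sq: "(2*a + c + d)^2 + (2*b + c + d)^2 + 2*c^2 + 2*d^2 = 4"
    using four_hnorm_eq_sum_squares[of a b c d] by (simp add: x)
  have "\<bar>c\<bar> \<le> 1" "\<bar>d\<bar> \<le> 1" "\<bar>2*a + c + d\<bar> \<le> 2" "\<bar>2*b + c + d\<bar> \<le> 2"
    using sq by (intro abs_le_if_square_less; simp; smt (verit) zero_le_power2)+
  then have "a \<in> {-2..2}" "b \<in> {-2..2}" "c \<in> {-1..1}" "d \<in> {-1..1}" by auto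
  then show "x \<in> set unit_coords"
    using \<open>hnorm x = 1\<close> unfolding unit_coords_def set_filter set_hc_box set_upto x by blast
qed

lemma H122_units_eq: "H122_units = quat_of ` set unit_coords"
proof -
  have "qN (quat_of x) = 1 \<longleftrightarrow> x \<in> set unit_coords" for x
    by (simp add: qN_quat_of hnorm_eq_1_iff [symmetric] qscalar_def one_quat_def)
  then show ?thesis
    unfolding H122_units_def H122_eq_range by auto
qed

lemma odd_norm_quat_of_iff: "odd_norm (quat_of x) \<longleftrightarrow> odd (hnorm x)"
  by (simp add: odd_norm_def qN_quat_of qscalar_def)

fun reduce_mod4 :: "hcoord \<Rightarrow> hcoord" where
  "reduce_mod4 (HC a b c d) = HC (a mod 4) (b mod 4) (c mod 4) (d mod 4)"

lemma reduce_mod4_decomp: "\<exists>z. x = reduce_mod4 x + hc_scale 4 z"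
proof (cases x)
  case (HC a b c d)
  then have "x = reduce_mod4 x + hc_scale 4 (HC (a div 4) (b div 4) (c div 4) (d div 4))"
    by simp
  then show ?thesis ..
qed

definition residues_mod4 :: "hcoord list" where
  "residues_mod4 = [HC a b c d. a \<leftarrow> [0..3], b \<leftarrow> [0..3], c \<leftarrow> [0..3], d \<leftarrow> [0..3]]"

lemma reduce_mod4_in_residues: "reduce_mod4 x \<in> set residues_mod4"
  unfolding residues_mod4_def set_hc_box set_upto by (cases x) auto

lemma mult_add_hc_scale_left: "(y + hc_scale k z) * x = y * x + hc_scale k (z * x)"
  by (cases x; cases y; cases z) (simp add: algebra_simps)

lemma mult_add_hc_scale_right: "x * (y + hc_scale k z) = x * y + hc_scale k (x * z)"
  by (cases x; cases y; cases z) (simp add: algebra_simps)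

lemma diff_add_hc_scale: "(y + hc_scale k z) - w = (y - w) + hc_scale k z"
  by (cases w; cases y; cases z) simp

lemma in_I_add_hc_scale4: "in_I (y + hc_scale 4 z) \<longleftrightarrow> in_I y"
  by (cases y; cases z) (simp; presburger)

lemma hprimary_add_hc_scale4: "hprimary (y + hc_scale 4 z) \<longleftrightarrow> hprimary y"
  unfolding hprimary_def diff_add_hc_scale in_I_add_hc_scale4 ..

lemma odd_hnorm_add_hc_scale: "even k \<Longrightarrow> odd (hnorm (y + hc_scale k z)) \<longleftrightarrow> odd (hnorm y)"
  by (cases y; cases z) (auto simp: algebra_simps)

lemma unit_coords_eq:
  "unit_coords =
    [HC (-1) (-1) 0 1, HC (-1) (-1) 1 0, HC (-1) (-1) 1 1, HC (-1) 0 0 0, HC (-1) 0 0 1,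
     HC (-1) 0 1 0, HC 0 (-1) 0 0, HC 0 (-1) 0 1, HC 0 (-1) 1 0, HC 0 0 (-1) 0, HC 0 0 (-1) 1,
     HC 0 0 0 (-1), HC 0 0 0 1, HC 0 0 1 (-1), HC 0 0 1 0, HC 0 1 (-1) 0, HC 0 1 0 (-1),
     HC 0 1 0 0, HC 1 0 (-1) 0, HC 1 0 0 (-1), HC 1 0 0 0, HC 1 1 (-1) (-1), HC 1 1 (-1) 0,
     HC 1 1 0 (-1)]"
  by code_simp

text \<open>Rewriting with \<open>unit_coords_eq\<close> first keeps the evaluation from re-filtering the box
  once per residue.\<close>
lemma residues_mod4_unique_primary_unit:
  "list_all (\<lambda>r. odd (hnorm r) \<longrightarrow>
      length (filter (\<lambda>u. hprimary (r * u)) unit_coords) = 1 \<and>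
      length (filter (\<lambda>u. hprimary (u * r)) unit_coords) = 1) residues_mod4"
  unfolding unit_coords_eq by code_simp

lemma unique_primary_unit_coords:
  assumes "odd (hnorm x)"
  shows "(\<exists>!u. u \<in> set unit_coords \<and> hprimary (x * u))
       \<and> (\<exists>!u. u \<in> set unit_coords \<and> hprimary (u * x))"
proof -
  obtain z where x: "x = reduce_mod4 x + hc_scale 4 z" using reduce_mod4_decomp ..
  have "odd (hnorm (reduce_mod4 x))"
    using assms odd_hnorm_add_hc_scale[of 4 "reduce_mod4 x" z] x by simp
  then have "length (filter (\<lambda>u. hprimary (reduce_mod4 x * u)) unit_coords) = 1"
    and "length (filter (\<lambda>u. hprimary (u * reduce_mod4 x)) unit_coords) = 1"
    using residues_mod4_unique_primary_unit reduce_mod4_in_residues[of x]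
    by (simp_all add: list_all_iff)
  moreover have "hprimary (x * u) \<longleftrightarrow> hprimary (reduce_mod4 x * u)"
    and "hprimary (u * x) \<longleftrightarrow> hprimary (u * reduce_mod4 x)" for u
    by (subst x; simp only: mult_add_hc_scale_left mult_add_hc_scale_right hprimary_add_hc_scale4)+
  ultimately show ?thesis
    by (simp add: ex1_if_length_filter_eq_1)
qed

theorem lemma15:
  assumes "b \<in> H122" and "odd_norm b"
  shows "(\<exists>!u. u \<in> H122_units \<and> primary (b * u))
       \<and> (\<exists>!u'. u' \<in> H122_units \<and> primary (u' * b))"
proof -
  obtain x where b: "b = quat_of x" using assms(1) by (auto simp: H122_eq_range)
  have "odd (hnorm x)" using assms(2) by (simp add: b odd_norm_quat_of_iff)
  then show ?thesis
    unfolding b H122_units_eq ex1_image_iff [OF inj_on_subset [OF inj_quat_of subset_UNIV]]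
    by (simp add: quat_of_mult [symmetric] primary_quat_of_iff unique_primary_unit_coords)
qed

end
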